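(* Let $M$ be a combinatorial $3$-manifold with vertex set $V=V_1\dot\cup V_2$, and let $S_{(V_1,V_2)}$ be a connected slicing of $M$ of genus $g$ with $q$ quadrilaterals. Suppose that for some $i\in\{1,2\}$ the induced subcomplex $\operatorname{span}(V_i)$ has dimension $1$, and let $n:=|V_i|$. Then \[ q\ \ge\ 3(n+g-1). \] In particular, this applies to every slicing all of whose facets are quadrilaterals.
   Context: A combinatorial $3$-manifold is a finite pure $3$-dimensional simplicial complex in which the link of every vertex is a combinatorial $2$-sphere. For a set $W$ of vertices, $\operatorname{span}(W)$ is the induced subcomplex of $M$ on $W$ (all simplices of $M$ with all vertices in $W$). A function $f:M\to\mathbb{R}$ is regular simplexwise linear (rsl) if it is linear on every simplex and takes pairwise distinct values on the vertices. Given a partition $V=V_1\dot\cup V_2$ of the vertex set into nonempty sets, choose an rsl-function $f$ with $f(v)<f(w)$ for all $v\in V_1$, $w\in V_2$ and $x_0$ strictly between $\max f(V_1)$ and $\min f(V_2)$; the slicing $S_{(V_1,V_2)}$ is the polyhedral surface $f^{-1}(x_0)$, whose facets are the triangles and quadrilaterals obtained by intersecting $f^{-1}(x_0)$ with the tetrahedra of $M$ meeting both $V_1$ and $V_2$ (a quadrilateral arises from a tetrahedron with exactly two vertices in each part). *)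

theory Defs
  imports Main
begin

definition simplicial_complex :: "'a set set \<Rightarrow> bool" where
  "simplicial_complex K \<longleftrightarrow> finite K \<and> (\<forall>\<sigma>\<in>K. finite \<sigma> \<and> \<sigma> \<noteq> {})
     \<and> (\<forall>\<sigma>\<in>K. \<forall>\<tau>. \<tau> \<subseteq> \<sigma> \<and> \<tau> \<noteq> {} \<longrightarrow> \<tau> \<in> K)"

definition verts :: "'a set set \<Rightarrow> 'a set" where
  "verts K = \<Union>K"

definition faces :: "'a set set \<Rightarrow> nat \<Rightarrow> 'a set set" where
  "faces K k = {\<sigma>\<in>K. card \<sigma> = k + 1}"

definition complex_dim :: "'a set set \<Rightarrow> nat \<Rightarrow> bool" where
  "complex_dim K d \<longleftrightarrow> (\<exists>\<sigma>\<in>K. card \<sigma> = d + 1) \<and> (\<forall>\<sigma>\<in>K. card \<sigma> \<le> d + 1)"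

definition pure_dim :: "'a set set \<Rightarrow> nat \<Rightarrow> bool" where
  "pure_dim K d \<longleftrightarrow> complex_dim K d \<and> (\<forall>\<sigma>\<in>K. \<exists>\<tau>\<in>K. \<sigma> \<subseteq> \<tau> \<and> card \<tau> = d + 1)"

definition link :: "'a set set \<Rightarrow> 'a \<Rightarrow> 'a set set" where
  "link K v = {\<sigma>. \<sigma> \<noteq> {} \<and> v \<notin> \<sigma> \<and> insert v \<sigma> \<in> K}"

definition span :: "'a set set \<Rightarrow> 'a set \<Rightarrow> 'a set set" where
  "span K W = {\<sigma>\<in>K. \<sigma> \<subseteq> W}"

text \<open>connectedness (of the 1-skeleton, equivalently of the polyhedron)\<close>
definition connected_cx :: "'a set set \<Rightarrow> bool" where
  "connected_cx K \<longleftrightarrow> verts K \<noteq> {} \<and>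
     (\<forall>u\<in>verts K. \<forall>w\<in>verts K. (u, w) \<in> {(x, y). {x, y} \<in> K}\<^sup>*)"

definition euler_char :: "'a set set \<Rightarrow> int" where
  "euler_char K = int (card (faces K 0)) - int (card (faces K 1)) + int (card (faces K 2))"

definition comb_1_sphere :: "'a set set \<Rightarrow> bool" where
  "comb_1_sphere K \<longleftrightarrow> simplicial_complex K \<and> pure_dim K 1 \<and> connected_cx K \<and>
     (\<forall>v\<in>verts K. card {e\<in>faces K 1. v \<in> e} = 2)"

definition comb_2_sphere :: "'a set set \<Rightarrow> bool" where
  "comb_2_sphere K \<longleftrightarrow> simplicial_complex K \<and> pure_dim K 2 \<and> connected_cx K \<and>
     (\<forall>e\<in>faces K 1. card {t\<in>faces K 2. e \<subseteq> t} = 2) \<and>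
     (\<forall>v\<in>verts K. comb_1_sphere (link K v)) \<and> euler_char K = 2"

definition comb_3_manifold :: "'a set set \<Rightarrow> bool" where
  "comb_3_manifold M \<longleftrightarrow> simplicial_complex M \<and> pure_dim M 3 \<and>
     (\<forall>v\<in>verts M. comb_2_sphere (link M v))"

text \<open>Combinatorial description of the slicing S_(V1,V2): its vertices are the edges of M
meeting both V1 and V2, its edges the triangles of M meeting both, its facets the tetrahedra
meeting both; a facet is a quadrilateral iff the tetrahedron has exactly two vertices in
each part.\<close>

definition crosses :: "'a set \<Rightarrow> 'a set \<Rightarrow> 'a set \<Rightarrow> bool" where
  "crosses V1 V2 \<sigma> \<longleftrightarrow> \<sigma> \<inter> V1 \<noteq> {} \<and> \<sigma> \<inter> V2 \<noteq> {}"

definition slice_verts :: "'a set set \<Rightarrow> 'a set \<Rightarrow> 'a set \<Rightarrow> 'a set set" where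
  "slice_verts M V1 V2 = {\<sigma>\<in>faces M 1. crosses V1 V2 \<sigma>}"

definition slice_edges :: "'a set set \<Rightarrow> 'a set \<Rightarrow> 'a set \<Rightarrow> 'a set set" where
  "slice_edges M V1 V2 = {\<sigma>\<in>faces M 2. crosses V1 V2 \<sigma>}"

definition slice_facets :: "'a set set \<Rightarrow> 'a set \<Rightarrow> 'a set \<Rightarrow> 'a set set" where
  "slice_facets M V1 V2 = {\<sigma>\<in>faces M 3. crosses V1 V2 \<sigma>}"

definition slice_quads :: "'a set set \<Rightarrow> 'a set \<Rightarrow> 'a set \<Rightarrow> 'a set set" where
  "slice_quads M V1 V2 = {\<sigma>\<in>faces M 3. card (\<sigma> \<inter> V1) = 2 \<and> card (\<sigma> \<inter> V2) = 2}"

definition slice_euler :: "'a set set \<Rightarrow> 'a set \<Rightarrow> 'a set \<Rightarrow> int" where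
  "slice_euler M V1 V2 = int (card (slice_verts M V1 V2)) - int (card (slice_edges M V1 V2))
      + int (card (slice_facets M V1 V2))"

definition slice_connected :: "'a set set \<Rightarrow> 'a set \<Rightarrow> 'a set \<Rightarrow> bool" where
  "slice_connected M V1 V2 \<longleftrightarrow> slice_verts M V1 V2 \<noteq> {} \<and>
     (\<forall>e\<in>slice_verts M V1 V2. \<forall>e'\<in>slice_verts M V1 V2.
        (e, e') \<in> {(x, y). \<exists>t\<in>slice_edges M V1 V2. x \<subseteq> t \<and> y \<subseteq> t}\<^sup>*)"

definition slice_genus :: "'a set set \<Rightarrow> 'a set \<Rightarrow> 'a set \<Rightarrow> int \<Rightarrow> bool" where
  "slice_genus M V1 V2 g \<longleftrightarrow> slice_euler M V1 V2 = 2 - 2 * g"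

end

theory Submission
  imports Defs
begin

text \<open>Weight every simplex \<open>\<sigma>\<close> by \<open>(-1)^|\<sigma>|\<close>. The cofaces of a vertex have signed count
\<open>-1 + \<chi>(link) = 1\<close>, and so do the cofaces of an edge, whose link is a circle with as many
vertices as edges. If \<open>span(W)\<close> has dimension at most 1, every simplex meets \<open>W\<close> in at most an
edge, so double counting incidences with the vertices of \<open>W\<close> and with the set \<open>E\<close> of edges of
\<open>span(W)\<close> gives \<open>|W| = (signed count of the simplices meeting W) + |E|\<close>. The simplices meeting
\<open>W\<close> are those of \<open>span(W)\<close>, with signed count \<open>|E| - |W|\<close>, and those crossing the partition,
with signed count \<open>\<chi>(S)\<close>. Hence \<open>\<chi>(S) = 2|W| - 2|E|\<close>, i.e. \<open>|E| = |W| + g - 1\<close>. Finally each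
edge of \<open>span(W)\<close> lies in at least three tetrahedra, and each of them is a quadrilateral of the
slicing whose intersection with \<open>W\<close> is that edge, so \<open>q \<ge> 3|E|\<close>.\<close>

lemma simplicial_complex_finite: "simplicial_complex K \<Longrightarrow> finite K"
  by (simp add: simplicial_complex_def)

lemma simplicial_complex_simplex:
  "simplicial_complex K \<Longrightarrow> \<sigma> \<in> K \<Longrightarrow> finite \<sigma> \<and> \<sigma> \<noteq> {}"
  by (simp add: simplicial_complex_def)

lemma simplicial_complex_face:
  "simplicial_complex K \<Longrightarrow> \<sigma> \<in> K \<Longrightarrow> \<tau> \<subseteq> \<sigma> \<Longrightarrow> \<tau> \<noteq> {} \<Longrightarrow> \<tau> \<in> K"
  unfolding simplicial_complex_def by blast

lemma simplicial_complex_finite_verts: "simplicial_complex K \<Longrightarrow> finite (verts K)"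
  by (auto simp: simplicial_complex_def verts_def)

lemma simplicial_complex_vertex:
  "simplicial_complex K \<Longrightarrow> v \<in> verts K \<Longrightarrow> {v} \<in> K"
  unfolding verts_def by (auto intro: simplicial_complex_face)

lemma card_faces_0:
  assumes "simplicial_complex K"
  shows "card (faces K 0) = card (verts K)"
proof -
  have "faces K 0 = (\<lambda>v. {v}) ` verts K"
    using assms simplicial_complex_vertex
    by (fastforce simp: faces_def verts_def card_Suc_eq)
  then show ?thesis
    by (simp add: card_image)
qed

lemma comb_1_sphere_card_edges:
  assumes "comb_1_sphere K"
  shows "card (faces K 1) = card (verts K)"
proof -
  have K: "simplicial_complex K" and deg: "\<And>v. v \<in> verts K \<Longrightarrow> card {e\<in>faces K 1. v \<in> e} = 2"
    using assms by (auto simp: comb_1_sphere_def)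
  have fin: "finite (verts K)" "finite (faces K 1)"
    using K by (simp_all add: simplicial_complex_finite_verts simplicial_complex_finite faces_def)
  have "2 * card (verts K) = (\<Sum>v\<in>verts K. card {e\<in>faces K 1. v \<in> e})"
    using deg by simp
  also have "\<dots> = 2 * card (faces K 1)"
  proof (rule sum_multicount[OF fin])
    show "\<forall>e\<in>faces K 1. card {v\<in>verts K. v \<in> e} = 2"
    proof
      fix e assume e: "e \<in> faces K 1"
      then have "{v\<in>verts K. v \<in> e} = e"
        by (auto simp: faces_def verts_def)
      with e show "card {v\<in>verts K. v \<in> e} = 2"
        by (simp add: faces_def)
    qed
  qed
  finally show ?thesis by simp
qed

lemma comb_1_sphere_card_verts:
  assumes "comb_1_sphere K"
  shows "3 \<le> card (verts K)"
proof -
  have K: "simplicial_complex K" and "complex_dim K 1"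
    and deg: "\<And>v. v \<in> verts K \<Longrightarrow> card {e\<in>faces K 1. v \<in> e} = 2"
    using assms by (auto simp: comb_1_sphere_def pure_dim_def)
  then obtain x y where "{x, y} \<in> K"
    unfolding complex_dim_def by (metis one_add_one card_2_iff)
  then have x: "x \<in> verts K"
    by (auto simp: verts_def)
  obtain e1 e2 where "e1 \<noteq> e2" and e12: "{e\<in>faces K 1. x \<in> e} = {e1, e2}"
    using deg[OF x] card_2_iff by metis
  then have "e1 \<in> faces K 1" "x \<in> e1" "e2 \<in> faces K 1" "x \<in> e2"
    by blast+
  then have "card e1 = 2" "card e2 = 2"
    by (simp_all add: faces_def)
  then obtain a b where a: "e1 = {x, a}" "x \<noteq> a" and b: "e2 = {x, b}" "x \<noteq> b"
    using \<open>x \<in> e1\<close> \<open>x \<in> e2\<close> unfolding card_2_iff by auto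
  have "{x, a, b} \<subseteq> verts K"
    using e12 a b by (auto simp: faces_def verts_def)
  moreover have "card {x, a, b} = 3"
    using a b \<open>e1 \<noteq> e2\<close> by auto
  moreover have "finite (verts K)"
    using K by (rule simplicial_complex_finite_verts)
  ultimately show ?thesis
    by (metis card_mono)
qed

definition simplex_link :: "'a set set \<Rightarrow> 'a set \<Rightarrow> 'a set set" where
  "simplex_link K \<tau> = {\<rho>. \<rho> \<noteq> {} \<and> \<rho> \<inter> \<tau> = {} \<and> \<rho> \<union> \<tau> \<in> K}"

definition cofaces :: "'a set set \<Rightarrow> 'a set \<Rightarrow> 'a set set" where
  "cofaces K \<tau> = {\<sigma>\<in>K. \<tau> \<subseteq> \<sigma>}"

lemma link_eq_simplex_link: "link K v = simplex_link K {v}"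
  by (auto simp: link_def simplex_link_def)

lemma link_link_eq_simplex_link:
  "v \<noteq> w \<Longrightarrow> link (link K v) w = simplex_link K {v, w}"
  by (auto simp: link_def simplex_link_def insert_commute)

lemma card_faces_simplex_link:
  assumes "finite \<tau>"
  shows "card (faces (simplex_link K \<tau>) k) = card {\<sigma>\<in>cofaces K \<tau>. card \<sigma> = card \<tau> + k + 1}"
proof (rule bij_betw_same_card[of "\<lambda>\<rho>. \<rho> \<union> \<tau>"], rule bij_betw_byWitness[where f' = "\<lambda>\<sigma>. \<sigma> - \<tau>"])
  show "\<forall>\<rho>\<in>faces (simplex_link K \<tau>) k. \<rho> \<union> \<tau> - \<tau> = \<rho>"
    by (auto simp: faces_def simplex_link_def)
  show "\<forall>\<sigma>\<in>{\<sigma>\<in>cofaces K \<tau>. card \<sigma> = card \<tau> + k + 1}. \<sigma> - \<tau> \<union> \<tau> = \<sigma>"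
    by (auto simp: cofaces_def)
  show "(\<lambda>\<rho>. \<rho> \<union> \<tau>) ` faces (simplex_link K \<tau>) k \<subseteq> {\<sigma>\<in>cofaces K \<tau>. card \<sigma> = card \<tau> + k + 1}"
  proof (rule image_subsetI)
    fix \<rho> assume "\<rho> \<in> faces (simplex_link K \<tau>) k"
    then have "\<rho> \<inter> \<tau> = {}" "\<rho> \<union> \<tau> \<in> K" "card \<rho> = k + 1" "finite \<rho>"
      by (auto simp: faces_def simplex_link_def card.infinite)
    with assms show "\<rho> \<union> \<tau> \<in> {\<sigma>\<in>cofaces K \<tau>. card \<sigma> = card \<tau> + k + 1}"
      by (simp add: cofaces_def card_Un_disjoint)
  qed
  show "(\<lambda>\<sigma>. \<sigma> - \<tau>) ` {\<sigma>\<in>cofaces K \<tau>. card \<sigma> = card \<tau> + k + 1} \<subseteq> faces (simplex_link K \<tau>) k"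
    using assms by (auto simp: faces_def simplex_link_def cofaces_def card_Diff_subset Un_absorb2)
qed

lemma comb_3_manifold_simplicial_complex: "comb_3_manifold M \<Longrightarrow> simplicial_complex M"
  by (simp add: comb_3_manifold_def)

lemma comb_3_manifold_card_le:
  "comb_3_manifold M \<Longrightarrow> \<sigma> \<in> M \<Longrightarrow> card \<sigma> \<le> 4"
  by (auto simp: comb_3_manifold_def pure_dim_def complex_dim_def)

lemma comb_3_manifold_vertex_link:
  "comb_3_manifold M \<Longrightarrow> v \<in> verts M \<Longrightarrow> comb_2_sphere (simplex_link M {v})"
  by (simp add: comb_3_manifold_def link_eq_simplex_link)

lemma comb_3_manifold_edge_link:
  assumes M: "comb_3_manifold M" and e: "e \<in> M" "card e = 2"
  shows "comb_1_sphere (simplex_link M e)"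
proof -
  obtain v w where vw: "e = {v, w}" "v \<noteq> w"
    using e(2) by (auto simp: card_2_iff)
  have "v \<in> verts M"
    using e vw by (auto simp: verts_def)
  then have "comb_2_sphere (link M v)"
    using M by (simp add: comb_3_manifold_def)
  moreover have "w \<in> verts (link M v)"
    using e vw by (auto simp: verts_def link_def intro!: exI[of _ "{w}"] simp: insert_commute)
  ultimately show ?thesis
    using vw by (auto simp: comb_2_sphere_def link_link_eq_simplex_link)
qed

definition signed_count :: "'a set set \<Rightarrow> int" where
  "signed_count A = (\<Sum>\<sigma>\<in>A. (-1) ^ card \<sigma>)"

lemma signed_count_by_card:
  assumes "finite A" and "\<And>\<sigma>. \<sigma> \<in> A \<Longrightarrow> card \<sigma> \<in> {m..n}"
  shows "signed_count A = (\<Sum>k=m..n. (-1) ^ k * int (card {\<sigma>\<in>A. card \<sigma> = k}))"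
proof -
  have "signed_count A = (\<Sum>k=m..n. \<Sum>\<sigma>\<in>{\<sigma>\<in>A. card \<sigma> = k}. (-1) ^ card \<sigma>)"
    unfolding signed_count_def using assms by (intro sum.group[symmetric]) auto
  also have "\<dots> = (\<Sum>k=m..n. (-1) ^ k * int (card {\<sigma>\<in>A. card \<sigma> = k}))"
    by (intro sum.cong) auto
  finally show ?thesis .
qed

lemma signed_count_vertex_cofaces:
  assumes M: "comb_3_manifold M" and v: "v \<in> verts M"
  shows "signed_count (cofaces M {v}) = 1"
proof -
  let ?L = "simplex_link M {v}"
  have sc: "simplicial_complex M"
    using M by (rule comb_3_manifold_simplicial_complex)
  have "signed_count (cofaces M {v}) = (\<Sum>k=1..4. (-1) ^ k * int (card {\<sigma>\<in>cofaces M {v}. card \<sigma> = k}))"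
  proof (rule signed_count_by_card)
    show "finite (cofaces M {v})"
      using sc by (simp add: cofaces_def simplicial_complex_finite)
    show "card \<sigma> \<in> {1..4}" if "\<sigma> \<in> cofaces M {v}" for \<sigma>
      using that simplicial_complex_simplex[OF sc] comb_3_manifold_card_le[OF M]
      by (auto simp: cofaces_def Suc_le_eq card_gt_0_iff)
  qed
  also have "\<dots> = - 1 + euler_char ?L"
  proof -
    have "{\<sigma>\<in>cofaces M {v}. card \<sigma> = 1} = {{v}}"
      using simplicial_complex_vertex[OF sc v] by (auto simp: cofaces_def card_1_singleton_iff)
    moreover have "card {\<sigma>\<in>cofaces M {v}. card \<sigma> = 2} = card (faces ?L 0)"
      "card {\<sigma>\<in>cofaces M {v}. card \<sigma> = 3} = card (faces ?L 1)"
      "card {\<sigma>\<in>cofaces M {v}. card \<sigma> = 4} = card (faces ?L 2)"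
      using card_faces_simplex_link[of "{v}" M] by (simp_all add: eval_nat_numeral)
    moreover have "{1..4::nat} = {1, 2, 3, 4}"
      by auto
    ultimately show ?thesis
      by (simp add: euler_char_def)
  qed
  also have "\<dots> = 1"
    using comb_3_manifold_vertex_link[OF M v] by (simp add: comb_2_sphere_def)
  finally show ?thesis .
qed

lemma card_edge_cofaces:
  assumes M: "comb_3_manifold M" and e: "e \<in> M" "card e = 2"
  shows "card {\<sigma>\<in>cofaces M e. card \<sigma> = 3} = card (verts (simplex_link M e))"
    and "card {\<sigma>\<in>cofaces M e. card \<sigma> = 4} = card (verts (simplex_link M e))"
proof -
  have K: "comb_1_sphere (simplex_link M e)"
    using M e by (rule comb_3_manifold_edge_link)
  have "finite e"
    using e(2) card.infinite by fastforce
  then have "card {\<sigma>\<in>cofaces M e. card \<sigma> = 3} = card (faces (simplex_link M e) 0)"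
    "card {\<sigma>\<in>cofaces M e. card \<sigma> = 4} = card (faces (simplex_link M e) 1)"
    using card_faces_simplex_link[of e M] e(2) by (simp_all add: eval_nat_numeral)
  moreover have "card (faces (simplex_link M e) 0) = card (verts (simplex_link M e))"
    using K card_faces_0 comb_1_sphere_def by blast
  moreover have "card (faces (simplex_link M e) 1) = card (verts (simplex_link M e))"
    using K by (rule comb_1_sphere_card_edges)
  ultimately show "card {\<sigma>\<in>cofaces M e. card \<sigma> = 3} = card (verts (simplex_link M e))"
    and "card {\<sigma>\<in>cofaces M e. card \<sigma> = 4} = card (verts (simplex_link M e))"
    by simp_all
qed

lemma signed_count_edge_cofaces:
  assumes M: "comb_3_manifold M" and e: "e \<in> M" "card e = 2"
  shows "signed_count (cofaces M e) = 1"
proof -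
  have sc: "simplicial_complex M"
    using M by (rule comb_3_manifold_simplicial_complex)
  have "signed_count (cofaces M e) = (\<Sum>k=2..4. (-1) ^ k * int (card {\<sigma>\<in>cofaces M e. card \<sigma> = k}))"
  proof (rule signed_count_by_card)
    show "finite (cofaces M e)"
      using sc by (simp add: cofaces_def simplicial_complex_finite)
    show "card \<sigma> \<in> {2..4}" if "\<sigma> \<in> cofaces M e" for \<sigma>
      using that e(2) simplicial_complex_simplex[OF sc] comb_3_manifold_card_le[OF M]
      by (auto simp: cofaces_def intro: card_mono[of _ e, simplified e(2)])
  qed
  moreover have "{\<sigma>\<in>cofaces M e. card \<sigma> = 2} = {e}"
    using e simplicial_complex_simplex[OF sc]
    by (auto simp: cofaces_def) (metis card_seteq order_refl)
  moreover have "{2..4::nat} = {2, 3, 4}"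
    by auto
  ultimately show ?thesis
    using card_edge_cofaces[OF M e] by simp
qed

lemma card_tetrahedra_containing_edge:
  assumes "comb_3_manifold M" and "e \<in> M" "card e = 2"
  shows "3 \<le> card {\<sigma>\<in>cofaces M e. card \<sigma> = 4}"
  using assms card_edge_cofaces comb_1_sphere_card_verts comb_3_manifold_edge_link by metis

lemma sum_incidences:
  assumes "finite A" and "finite B"
  shows "(\<Sum>b\<in>B. \<Sum>a\<in>{a\<in>A. R b a}. f a) = (\<Sum>a\<in>A. of_nat (card {b\<in>B. R b a}) * f a)"
  using sum.swap_restrict[OF assms(2,1), of "\<lambda>_. f"] by simp

lemma card_inter_le_2:
  assumes "simplicial_complex M" and dim: "\<forall>\<sigma>\<in>span M W. card \<sigma> \<le> 2" and "\<sigma> \<in> M"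
  shows "card (\<sigma> \<inter> W) \<le> 2"
proof (cases "\<sigma> \<inter> W = {}")
  case False
  then have "\<sigma> \<inter> W \<in> span M W"
    using assms simplicial_complex_face[of M \<sigma> "\<sigma> \<inter> W"] by (auto simp: span_def)
  then show ?thesis
    using dim by blast
qed simp

lemma inter_eq_span_edge:
  assumes "simplicial_complex M" and "\<forall>\<sigma>\<in>span M W. card \<sigma> \<le> 2" and "\<sigma> \<in> M"
    and "e \<in> faces (span M W) 1" and "e \<subseteq> \<sigma>"
  shows "\<sigma> \<inter> W = e"
proof -
  have "e \<subseteq> \<sigma> \<inter> W" "card e = 2" "finite \<sigma>"
    using assms simplicial_complex_simplex by (auto simp: faces_def span_def)
  then show ?thesis
    using card_inter_le_2[OF assms(1-3)] by (metis card_seteq finite_Int)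
qed

lemma card_span_edges_in_simplex:
  assumes sc: "simplicial_complex M" and dim: "\<forall>\<sigma>\<in>span M W. card \<sigma> \<le> 2" and \<sigma>: "\<sigma> \<in> M"
  shows "card {e\<in>faces (span M W) 1. e \<subseteq> \<sigma>} = (if card (\<sigma> \<inter> W) = 2 then 1 else 0)"
proof (cases "card (\<sigma> \<inter> W) = 2")
  case True
  then have "\<sigma> \<inter> W \<noteq> {}"
    by auto
  then have "\<sigma> \<inter> W \<in> faces (span M W) 1"
    using True sc \<sigma> simplicial_complex_face[of M \<sigma> "\<sigma> \<inter> W"] by (simp add: faces_def span_def)
  then have "{e\<in>faces (span M W) 1. e \<subseteq> \<sigma>} = {\<sigma> \<inter> W}"
    using inter_eq_span_edge[OF sc dim \<sigma>] by blast
  with True show ?thesis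
    by simp
next
  case False
  then have "{e\<in>faces (span M W) 1. e \<subseteq> \<sigma>} = {}"
    using inter_eq_span_edge[OF sc dim \<sigma>] by (force simp: faces_def)
  with False show ?thesis
    by (metis card.empty)
qed

lemma sum_card_inter_signed:
  assumes M: "comb_3_manifold M" and W: "W \<subseteq> verts M"
  shows "(\<Sum>\<sigma>\<in>M. int (card (\<sigma> \<inter> W)) * (-1) ^ card \<sigma>) = int (card W)"
proof -
  have sc: "simplicial_complex M"
    using M by (rule comb_3_manifold_simplicial_complex)
  have fin: "finite M" "finite W"
    using simplicial_complex_finite[OF sc] finite_subset[OF W simplicial_complex_finite_verts[OF sc]]
    by simp_all
  have "(\<Sum>\<sigma>\<in>M. int (card (\<sigma> \<inter> W)) * (-1) ^ card \<sigma>)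
      = (\<Sum>\<sigma>\<in>M. of_nat (card {v\<in>W. {v} \<subseteq> \<sigma>}) * (-1) ^ card \<sigma>)"
  proof -
    have "{v\<in>W. {v} \<subseteq> \<sigma>} = \<sigma> \<inter> W" for \<sigma>
      by auto
    then show ?thesis
      by simp
  qed
  also have "\<dots> = (\<Sum>v\<in>W. signed_count (cofaces M {v}))"
    unfolding signed_count_def cofaces_def by (rule sum_incidences[OF fin(1,2), symmetric])
  also have "\<dots> = (\<Sum>v\<in>W. 1)"
    using signed_count_vertex_cofaces[OF M] W by (intro sum.cong) auto
  finally show ?thesis
    by simp
qed

lemma sum_span_edges_signed:
  assumes M: "comb_3_manifold M" and dim: "\<forall>\<sigma>\<in>span M W. card \<sigma> \<le> 2"
  shows "(\<Sum>\<sigma>\<in>M. (if card (\<sigma> \<inter> W) = 2 then 1 else 0) * (-1) ^ card \<sigma>)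
    = int (card (faces (span M W) 1))"
proof -
  let ?E = "faces (span M W) 1"
  have sc: "simplicial_complex M"
    using M by (rule comb_3_manifold_simplicial_complex)
  have "finite M"
    using sc by (rule simplicial_complex_finite)
  moreover have "?E \<subseteq> M"
    by (auto simp: faces_def span_def)
  ultimately have fin: "finite M" "finite ?E"
    by (auto intro: finite_subset)
  have "(\<Sum>\<sigma>\<in>M. (if card (\<sigma> \<inter> W) = 2 then 1 else 0) * (-1) ^ card \<sigma>)
      = (\<Sum>\<sigma>\<in>M. of_nat (card {e\<in>?E. e \<subseteq> \<sigma>}) * (-1) ^ card \<sigma>)"
    using card_span_edges_in_simplex[OF sc dim] by (intro sum.cong) auto
  also have "\<dots> = (\<Sum>e\<in>?E. signed_count (cofaces M e))"
    unfolding signed_count_def cofaces_def by (rule sum_incidences[OF fin, symmetric])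
  also have "\<dots> = (\<Sum>e\<in>?E. 1)"
    using signed_count_edge_cofaces[OF M] \<open>?E \<subseteq> M\<close> by (intro sum.cong) (auto simp: faces_def)
  finally show ?thesis
    by simp
qed

lemma slice_euler_eq_signed_count:
  assumes M: "comb_3_manifold M" and "V1 \<inter> V2 = {}"
  shows "slice_euler M V1 V2 = signed_count {\<sigma>\<in>M. crosses V1 V2 \<sigma>}"
proof -
  have sc: "simplicial_complex M"
    using M by (rule comb_3_manifold_simplicial_complex)
  have "signed_count {\<sigma>\<in>M. crosses V1 V2 \<sigma>}
      = (\<Sum>k=2..4. (-1) ^ k * int (card {\<sigma>\<in>{\<sigma>\<in>M. crosses V1 V2 \<sigma>}. card \<sigma> = k}))"
  proof (rule signed_count_by_card)
    show "finite {\<sigma>\<in>M. crosses V1 V2 \<sigma>}"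
      using sc by (simp add: simplicial_complex_finite)
    show "card \<sigma> \<in> {2..4}" if \<sigma>: "\<sigma> \<in> {\<sigma>\<in>M. crosses V1 V2 \<sigma>}" for \<sigma>
    proof -
      obtain x y where "x \<in> \<sigma> \<inter> V1" "y \<in> \<sigma> \<inter> V2" "\<sigma> \<in> M"
        using \<sigma> by (auto simp: crosses_def)
      moreover have "x \<noteq> y"
        using calculation assms(2) by auto
      ultimately have "card {x, y} \<le> card \<sigma>"
        using simplicial_complex_simplex[OF sc] by (intro card_mono) auto
      then show ?thesis
        using \<open>x \<noteq> y\<close> comb_3_manifold_card_le[OF M \<open>\<sigma> \<in> M\<close>] by simp
    qed
  qed
  moreover have "{2..4::nat} = {2, 3, 4}"
    by auto
  moreover have "{\<sigma>\<in>{\<sigma>\<in>M. crosses V1 V2 \<sigma>}. card \<sigma> = 2} = slice_verts M V1 V2"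
    "{\<sigma>\<in>{\<sigma>\<in>M. crosses V1 V2 \<sigma>}. card \<sigma> = 3} = slice_edges M V1 V2"
    "{\<sigma>\<in>{\<sigma>\<in>M. crosses V1 V2 \<sigma>}. card \<sigma> = 4} = slice_facets M V1 V2"
    by (auto simp: slice_verts_def slice_edges_def slice_facets_def faces_def)
  ultimately show ?thesis
    by (simp add: slice_euler_def)
qed

lemma signed_count_span:
  assumes sc: "simplicial_complex M" and W: "W \<subseteq> verts M"
    and dim: "\<forall>\<sigma>\<in>span M W. card \<sigma> \<le> 2"
  shows "signed_count (span M W) = int (card (faces (span M W) 1)) - int (card W)"
proof -
  have "signed_count (span M W) = (\<Sum>k=1..2. (-1) ^ k * int (card {\<sigma>\<in>span M W. card \<sigma> = k}))"
    using sc dim by (intro signed_count_by_card)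
      (auto simp: span_def simplicial_complex_def Suc_le_eq card_gt_0_iff)
  moreover have "{\<sigma>\<in>span M W. card \<sigma> = 1} = (\<lambda>w. {w}) ` W"
    using W simplicial_complex_vertex[OF sc] by (auto simp: span_def card_1_singleton_iff)
  moreover have "{1..2::nat} = {1, 2}"
    by auto
  moreover have "faces (span M W) 1 = {\<sigma>\<in>span M W. card \<sigma> = 2}"
    by (simp add: faces_def numeral_2_eq_2)
  ultimately show ?thesis
    by (simp add: card_image)
qed

lemma signed_count_meeting:
  assumes sc: "simplicial_complex M" and V: "W \<union> U = verts M" "W \<inter> U = {}"
  shows "signed_count {\<sigma>\<in>M. \<sigma> \<inter> W \<noteq> {}} = signed_count (span M W) + signed_count {\<sigma>\<in>M. crosses W U \<sigma>}"
proof -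
  have "{\<sigma>\<in>M. \<sigma> \<inter> W \<noteq> {}} = span M W \<union> {\<sigma>\<in>M. crosses W U \<sigma>}"
    using V simplicial_complex_simplex[OF sc] by (auto simp: span_def crosses_def verts_def Int_absorb2)
  moreover have "span M W \<inter> {\<sigma>\<in>M. crosses W U \<sigma>} = {}"
    using V(2) by (auto simp: span_def crosses_def)
  moreover have "finite M"
    using sc by (rule simplicial_complex_finite)
  ultimately show ?thesis
    unfolding signed_count_def by (simp add: sum.union_disjoint span_def)
qed

lemma slice_euler_eq:
  assumes M: "comb_3_manifold M" and V: "W \<union> U = verts M" "W \<inter> U = {}"
    and dim: "\<forall>\<sigma>\<in>span M W. card \<sigma> \<le> 2"
  shows "slice_euler M W U = 2 * int (card W) - 2 * int (card (faces (span M W) 1))"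
proof -
  have sc: "simplicial_complex M"
    using M by (rule comb_3_manifold_simplicial_complex)
  have pointwise: "int (card (\<sigma> \<inter> W))
      = (if \<sigma> \<inter> W \<noteq> {} then 1 else 0) + (if card (\<sigma> \<inter> W) = 2 then 1 else 0)"
    if "\<sigma> \<in> M" for \<sigma>
  proof -
    have "card (\<sigma> \<inter> W) = 0 \<longleftrightarrow> \<sigma> \<inter> W = {}"
      using simplicial_complex_simplex[OF sc that] by simp
    with card_inter_le_2[OF sc dim that] show ?thesis
      by (auto simp: le_Suc_eq eval_nat_numeral)
  qed
  have W: "W \<subseteq> verts M"
    using V(1) by blast
  have "int (card W) = (\<Sum>\<sigma>\<in>M. int (card (\<sigma> \<inter> W)) * (-1) ^ card \<sigma>)"
    using sum_card_inter_signed[OF M W] by simp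
  also have "\<dots> = (\<Sum>\<sigma>\<in>M. if \<sigma> \<inter> W \<noteq> {} then (-1) ^ card \<sigma> else 0)
      + (\<Sum>\<sigma>\<in>M. (if card (\<sigma> \<inter> W) = 2 then 1 else 0) * (-1) ^ card \<sigma>)"
    unfolding sum.distrib[symmetric] by (intro sum.cong) (simp_all add: pointwise distrib_right)
  also have "\<dots> = signed_count {\<sigma>\<in>M. \<sigma> \<inter> W \<noteq> {}} + int (card (faces (span M W) 1))"
    using sum_span_edges_signed[OF M dim] simplicial_complex_finite[OF sc]
    by (simp add: signed_count_def sum.inter_filter)
  finally have "int (card W) = signed_count {\<sigma>\<in>M. \<sigma> \<inter> W \<noteq> {}} + int (card (faces (span M W) 1))" .
  then show ?thesis
    using signed_count_meeting[OF sc V] signed_count_span[OF sc W dim]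
      slice_euler_eq_signed_count[OF M V(2)] by simp
qed

lemma card_slice_quads_ge:
  assumes M: "comb_3_manifold M" and V: "W \<union> U = verts M" "W \<inter> U = {}"
    and dim: "\<forall>\<sigma>\<in>span M W. card \<sigma> \<le> 2"
  shows "3 * card (faces (span M W) 1) \<le> card (slice_quads M W U)"
proof -
  let ?E = "faces (span M W) 1"
  let ?T = "\<lambda>e. {\<sigma>\<in>cofaces M e. card \<sigma> = 4}"
  have sc: "simplicial_complex M"
    using M by (rule comb_3_manifold_simplicial_complex)
  have fin: "finite M" "finite ?E"
    using sc by (auto simp: simplicial_complex_def faces_def span_def)
  have inter: "\<sigma> \<inter> W = e" if "e \<in> ?E" "\<sigma> \<in> ?T e" for e \<sigma>
    using inter_eq_span_edge[OF sc dim _ that(1)] that(2) by (simp add: cofaces_def)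
  have "3 * card ?E \<le> (\<Sum>e\<in>?E. card (?T e))"
    using sum_bounded_below[of ?E 3 "\<lambda>e. card (?T e)"] card_tetrahedra_containing_edge[OF M]
    by (auto simp: faces_def span_def)
  also have "\<dots> = card (\<Union>e\<in>?E. ?T e)"
  proof (rule card_UN_disjoint[symmetric])
    show "finite ?E" "\<forall>e\<in>?E. finite (?T e)"
      using fin by (simp_all add: cofaces_def)
    show "\<forall>e\<in>?E. \<forall>e'\<in>?E. e \<noteq> e' \<longrightarrow> ?T e \<inter> ?T e' = {}"
      using inter by blast
  qed
  also have "\<dots> \<le> card (slice_quads M W U)"
  proof (intro card_mono)
    show "finite (slice_quads M W U)"
      using fin by (simp add: slice_quads_def faces_def)
    show "(\<Union>e\<in>?E. ?T e) \<subseteq> slice_quads M W U"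
    proof (intro UN_least subsetI)
      fix e \<sigma> assume e: "e \<in> ?E" and \<sigma>: "\<sigma> \<in> ?T e"
      then have "\<sigma> \<in> M" "card \<sigma> = 4" "card (\<sigma> \<inter> W) = 2" "finite \<sigma>"
        using inter simplicial_complex_simplex[OF sc] by (auto simp: cofaces_def faces_def)
      moreover have "\<sigma> \<inter> U = \<sigma> - (\<sigma> \<inter> W)"
        using V \<open>\<sigma> \<in> M\<close> by (auto simp: verts_def)
      ultimately show "\<sigma> \<in> slice_quads M W U"
        by (simp add: slice_quads_def faces_def card_Diff_subset)
    qed
  qed
  finally show ?thesis .
qed

lemma slice_euler_commute: "slice_euler M V1 V2 = slice_euler M V2 V1"
  and slice_quads_commute: "slice_quads M V1 V2 = slice_quads M V2 V1"
  unfolding slice_euler_def slice_verts_def slice_edges_def slice_facets_def slice_quads_def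
    crosses_def by (auto simp: conj_commute)

theorem theorem4p4:
  fixes M :: "'a set set" and V1 V2 W :: "'a set" and g :: int
  assumes "comb_3_manifold M"
    and "V1 \<union> V2 = verts M" and "V1 \<inter> V2 = {}" and "V1 \<noteq> {}" and "V2 \<noteq> {}"
    and "slice_connected M V1 V2"
    and "slice_genus M V1 V2 g"
    and "W = V1 \<or> W = V2"
    and "complex_dim (span M W) 1"
  shows "int (card (slice_quads M V1 V2)) \<ge> 3 * (int (card W) + g - 1)"
proof -
  obtain U where U: "W \<union> U = verts M" "W \<inter> U = {}"
    and euler: "slice_euler M W U = 2 - 2 * g" and quads: "slice_quads M W U = slice_quads M V1 V2"
    using assms(2,3,7,8) unfolding slice_genus_def
    by (metis Int_commute Un_commute slice_euler_commute slice_quads_commute)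
  have dim: "\<forall>\<sigma>\<in>span M W. card \<sigma> \<le> 2"
    using assms(9) by (simp add: complex_dim_def numeral_2_eq_2)
  have "int (card (faces (span M W) 1)) = int (card W) + g - 1"
    using slice_euler_eq[OF assms(1) U dim] euler by simp
  then show ?thesis
    using card_slice_quads_ge[OF assms(1) U dim] quads by simp
qed

end
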